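(* Let $T>0$, $d\ge1$, and let $L:[0,T]\times\mathbb{R}^d\to\mathbb{R}^d$ satisfy: $|L(t,x)|\le h_1(t)$ for all $(t,x)\in(0,T)\times\mathbb{R}^d$, and $|L(t,x)-L(t,y)|\le h_2(t)|x-y|$ for all $(t,x,y)\in(0,T)\times\mathbb{R}^d\times\mathbb{R}^d$, where $h_1,h_2:(0,T)\to\mathbb{R}^+$ are such that there exists $D_T>0$ with $\int_0^th_i(s)ds\le D_T$ for all $t\le T$, $i=1,2$. On a filtered probability space $(\Omega,\mathcal F,\mathbb P,(\mathcal F_t))$ with a $d$-dimensional Brownian motion $W$ and an $\mathcal F_0$-measurable random variable $X_0\sim q_0$, the equation $$dX_t=dW_t+\Big\{\int_0^t\int_{\mathbb{R}^d}L(t-s,X_t-y)\,\mathbb Q_s(dy)\,ds\Big\}dt,\quad t\le T,\qquad \mathbb Q_s=\mathcal L(X_s),$$ admits a unique strong solution. *)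

theory Defs
  imports "HOL-Probability.Probability"
begin

definition gauss_law :: "real \<Rightarrow> (real ^ 'd) measure" where
  "gauss_law v = density lborel (\<lambda>x. ennreal (\<Prod>i\<in>UNIV. normal_density 0 (sqrt v) (x $ i)))"

definition filtered_space :: "'a measure \<Rightarrow> (real \<Rightarrow> 'a measure) \<Rightarrow> bool" where
  "filtered_space M F \<longleftrightarrow> prob_space M \<and> filtration (space M) F \<and> (\<forall>t. sets (F t) \<subseteq> sets M)"

definition brownian_motion ::
  "'a measure \<Rightarrow> (real \<Rightarrow> 'a measure) \<Rightarrow> real \<Rightarrow> (real \<Rightarrow> 'a \<Rightarrow> real ^ 'd) \<Rightarrow> bool" where
  "brownian_motion M F T W \<longleftrightarrow>
     (\<forall>\<omega>\<in>space M. W 0 \<omega> = 0) \<and>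
     (\<forall>\<omega>\<in>space M. continuous_on {0..T} (\<lambda>t. W t \<omega>)) \<and>
     (\<forall>t\<in>{0..T}. W t \<in> borel_measurable (F t)) \<and>
     (\<forall>s t. 0 \<le> s \<longrightarrow> s < t \<longrightarrow> t \<le> T \<longrightarrow>
        distr M borel (\<lambda>\<omega>. W t \<omega> - W s \<omega>) = gauss_law (t - s) \<and>
        (\<forall>A\<in>sets (F s). \<forall>B\<in>sets borel.
           measure M (A \<inter> ((\<lambda>\<omega>. W t \<omega> - W s \<omega>) -` B \<inter> space M)) =
           measure M A * measure M ((\<lambda>\<omega>. W t \<omega> - W s \<omega>) -` B \<inter> space M)))"

definition mv_drift ::
  "'a measure \<Rightarrow> (real \<Rightarrow> real ^ 'd \<Rightarrow> real ^ 'd) \<Rightarrow> (real \<Rightarrow> 'a \<Rightarrow> real ^ 'd) \<Rightarrow> real \<Rightarrow> 'a \<Rightarrow> real ^ 'd" where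
  "mv_drift M L X t \<omega> =
     (\<integral>s\<in>{0..t}. (\<integral>y. L (t - s) (X t \<omega> - y) \<partial>(distr M borel (X s))) \<partial>lborel)"

definition mv_solution ::
  "'a measure \<Rightarrow> (real \<Rightarrow> 'a measure) \<Rightarrow> real \<Rightarrow> (real \<Rightarrow> 'a \<Rightarrow> real ^ 'd) \<Rightarrow> ('a \<Rightarrow> real ^ 'd)
     \<Rightarrow> (real \<Rightarrow> real ^ 'd \<Rightarrow> real ^ 'd) \<Rightarrow> (real \<Rightarrow> 'a \<Rightarrow> real ^ 'd) \<Rightarrow> bool" where
  "mv_solution M F T W X0 L X \<longleftrightarrow>
     (\<forall>t\<in>{0..T}. X t \<in> borel_measurable (F t)) \<and>
     (\<forall>\<omega>\<in>space M. continuous_on {0..T} (\<lambda>t. X t \<omega>)) \<and>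
     (AE \<omega> in M. \<forall>t\<in>{0..T}.
        X t \<omega> = X0 \<omega> + W t \<omega> + (\<integral>r\<in>{0..t}. mv_drift M L X r \<omega> \<partial>lborel))"

end

theory Submission
  imports Defs
begin

text \<open>The drift is bounded by \<open>D\<close>, and it is Lipschitz in the process: if two adapted continuous
  processes differ by at most \<open>c\<close> up to time \<open>r\<close> (almost surely at each earlier time, and on the
  sample path at time \<open>r\<close> itself), their drifts at time \<open>r\<close> differ by at most \<open>2 D c\<close>, because both
  the spatial and the measure argument of \<open>L\<close> move by at most \<open>c\<close> and \<open>h\<^sub>2\<close> integrates to at
  most \<open>D\<close>. In the weighted norm \<open>sup\<^sub>t e\<^sup>-\<^sup>4\<^sup>D\<^sup>t |X\<^sub>t - Y\<^sub>t|\<close> the map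
  \<open>X \<mapsto> X\<^sub>0 + W + \<integral> drift\<close> is therefore a pathwise contraction with constant \<open>1/2\<close>.
  Picard iteration converges uniformly on every path to an adapted continuous fixed point, and
  any solution stays within \<open>2 D T e\<^sup>4\<^sup>D\<^sup>t / 2\<^sup>n\<close> of it for every \<open>n\<close>.\<close>

lemma LIMSEQ_ceiling_scaled:
  fixes x :: real assumes "x \<ge> 0"
  shows "(\<lambda>k. real (nat \<lceil>real (Suc k) * x\<rceil>) / real (Suc k)) \<longlonglongrightarrow> x"
proof (rule real_tendsto_sandwich[where f="\<lambda>k. x" and h="\<lambda>k. x + 1 / real (Suc k)"])
  have nat_ceiling: "real (nat \<lceil>real (Suc k) * x\<rceil>) = of_int \<lceil>real (Suc k) * x\<rceil>" for k
    using assms by simp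
  show "\<forall>\<^sub>F n in sequentially. x \<le> real (nat \<lceil>real (Suc n) * x\<rceil>) / real (Suc n)"
  proof (intro always_eventually allI)
    fix n
    have "real (Suc n) * x \<le> of_int \<lceil>real (Suc n) * x\<rceil>" by (rule le_of_int_ceiling)
    then show "x \<le> real (nat \<lceil>real (Suc n) * x\<rceil>) / real (Suc n)"
      unfolding nat_ceiling by (simp add: field_simps)
  qed
  show "\<forall>\<^sub>F n in sequentially. real (nat \<lceil>real (Suc n) * x\<rceil>) / real (Suc n) \<le> x + 1 / real (Suc n)"
  proof (intro always_eventually allI)
    fix n
    have "of_int \<lceil>real (Suc n) * x\<rceil> \<le> real (Suc n) * x + 1"
      using ceiling_correct[of "real (Suc n) * x"] by linarith
    then have "of_int \<lceil>real (Suc n) * x\<rceil> / real (Suc n) \<le> (real (Suc n) * x + 1) / real (Suc n)"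
      by (rule divide_right_mono) auto
    then show "real (nat \<lceil>real (Suc n) * x\<rceil>) / real (Suc n) \<le> x + 1 / real (Suc n)"
      unfolding nat_ceiling by (simp add: field_simps)
  qed
  show "(\<lambda>n. x + 1 / real (Suc n)) \<longlonglongrightarrow> x"
    using tendsto_add[OF tendsto_const[of x] LIMSEQ_Suc[OF lim_inverse_n']] by simp
qed simp

lemma clamp_real_eq:
  fixes t s :: real assumes "t \<ge> 0"
  shows "clamp 0 t s = min t (max 0 s)"
  using assms unfolding clamp_def Basis_real_def by (simp add: min_def max_def)

lemma clamp_real_id: "s \<in> {0..t} \<Longrightarrow> clamp 0 t s = (s::real)"
  by (auto simp: clamp_real_eq)

text \<open>Clamping to \<open>[0, t]\<close> extends the paths to all of \<open>\<real>\<close>; the clamped process is the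
  pointwise limit of its samples on the grids \<open>\<lceil>k s\<rceil> / k\<close>.\<close>
lemma borel_measurable_clamped_process:
  fixes Z :: "real \<Rightarrow> 'a \<Rightarrow> 'b::metric_space"
  assumes t: "t \<ge> 0"
    and meas: "\<And>u. u \<in> {0..t} \<Longrightarrow> Z u \<in> borel_measurable N"
    and cont: "\<And>\<omega>. \<omega> \<in> space N \<Longrightarrow> continuous_on {0..t} (\<lambda>u. Z u \<omega>)"
  shows "(\<lambda>(\<omega>, s). Z (clamp 0 t s) \<omega>) \<in> borel_measurable (N \<Otimes>\<^sub>M borel)"
proof (rule borel_measurable_LIMSEQ_metric)
  let ?grid = "\<lambda>k (s::real). min t (real (nat \<lceil>real (Suc k) * max 0 s\<rceil>) / real (Suc k))"
  fix k
  have index: "(\<lambda>x::'a \<times> real. nat \<lceil>real (Suc k) * max 0 (snd x)\<rceil>)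
      \<in> measurable (N \<Otimes>\<^sub>M borel) (count_space UNIV)"
    by measurable
  have sample: "(\<lambda>x::'a \<times> real. Z (min t (real j / real (Suc k))) (fst x))
      \<in> borel_measurable (N \<Otimes>\<^sub>M borel)" for j
  proof -
    have "Z (min t (real j / real (Suc k))) \<in> borel_measurable N" using t by (intro meas) auto
    then show ?thesis by measurable
  qed
  show "(\<lambda>x. case x of (\<omega>, s) \<Rightarrow> Z (?grid k s) \<omega>) \<in> borel_measurable (N \<Otimes>\<^sub>M borel)"
    unfolding case_prod_beta by (rule measurable_compose_countable[OF sample index])
next
  let ?grid = "\<lambda>k (s::real). min t (real (nat \<lceil>real (Suc k) * max 0 s\<rceil>) / real (Suc k))"
  fix x assume x: "x \<in> space (N \<Otimes>\<^sub>M (borel::real measure))"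
  obtain \<omega> s where x_eq: "x = (\<omega>, s)" by (cases x)
  have \<omega>: "\<omega> \<in> space N" using x x_eq by (simp add: space_pair_measure)
  have "(\<lambda>k. ?grid k s) \<longlonglongrightarrow> min t (max 0 s)"
    by (intro tendsto_min tendsto_const LIMSEQ_ceiling_scaled) simp
  then have lim: "(\<lambda>k. ?grid k s) \<longlonglongrightarrow> clamp 0 t s"
    using t by (simp add: clamp_real_eq)
  have "0 \<le> real (nat \<lceil>real (Suc k) * max 0 s\<rceil>) / real (Suc k)" for k
    by (intro divide_nonneg_nonneg of_nat_0_le_iff)
  then have "?grid k s \<in> {0..t}" for k
    using t by (auto simp only: atLeastAtMost_iff min.bounded_iff min.cobounded1)
  moreover have "clamp 0 t s \<in> {0..t}"
    using t by (auto simp: clamp_real_eq)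
  ultimately have "(\<lambda>k. Z (?grid k s) \<omega>) \<longlonglongrightarrow> Z (clamp 0 t s) \<omega>"
    by (intro continuous_on_tendsto_compose[OF cont[OF \<omega>] lim]) auto
  then show "(\<lambda>k. case x of (\<omega>, s) \<Rightarrow> Z (?grid k s) \<omega>) \<longlonglongrightarrow> (case x of (\<omega>, s) \<Rightarrow> Z (clamp 0 t s) \<omega>)"
    using x_eq by simp
qed

lemma (in prob_space) norm_integral_le_AE_bound:
  fixes g :: "'a \<Rightarrow> 'b::{banach, second_countable_topology}"
  assumes bound: "AE \<omega> in M. norm (g \<omega>) \<le> B"
  shows "norm (\<integral>\<omega>. g \<omega> \<partial>M) \<le> B"
proof (cases "integrable M g")
  case True
  have "norm (\<integral>\<omega>. g \<omega> \<partial>M) \<le> (\<integral>\<omega>. norm (g \<omega>) \<partial>M)" by (rule integral_norm_bound)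
  also have "\<dots> \<le> (\<integral>\<omega>. B \<partial>M)"
    using True bound by (intro integral_mono_AE) auto
  finally show ?thesis by (simp add: prob_space)
next
  case False
  have "AE \<omega> in M. 0 \<le> B"
    using bound by eventually_elim (use norm_ge_zero order_trans in blast)
  with False show ?thesis by (simp add: not_integrable_integral_eq)
qed

lemma nn_integral_atLeastAtMost_reflect:
  fixes f :: "real \<Rightarrow> real"
  assumes f: "f \<in> borel_measurable borel"
  shows "(\<integral>\<^sup>+ s. ennreal (indicator {0..r} s * f s) \<partial>lborel)
    = (\<integral>\<^sup>+ u. ennreal (indicator {0<..<r} u * f (r - u)) \<partial>lborel)"
proof -
  have "(\<integral>\<^sup>+ s. ennreal (indicator {0..r} s * f s) \<partial>lborel)
      = (\<integral>\<^sup>+ s. ennreal (indicator {0<..<r} s * f s) \<partial>lborel)"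
  proof (rule nn_integral_cong_AE)
    have "AE s in lborel. s \<noteq> 0" "AE s in lborel. s \<noteq> r" by (rule AE_lborel_singleton)+
    then show "AE s in lborel. ennreal (indicator {0..r} s * f s) = ennreal (indicator {0<..<r} s * f s)"
      by eventually_elim (auto simp: indicator_def)
  qed
  also have "\<dots> = (\<integral>\<^sup>+ u. ennreal (indicator {0<..<r} u * f (r - u)) \<partial>lborel)"
  proof -
    have "(\<lambda>s. ennreal (indicator {0<..<r} s * f s)) \<in> borel_measurable borel" using f by measurable
    note nn_integral_real_affine[OF this, of "-1" r]
    moreover have "indicator {0<..<r} (r + -1 * u) = (indicator {0<..<r} u :: real)" for u
      by (auto simp: indicator_def)
    ultimately show ?thesis by simp
  qed
  finally show ?thesis .
qed

lemma nn_integral_reflected_bound: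
  fixes f h :: "real \<Rightarrow> real"
  assumes f: "f \<in> borel_measurable borel" and C: "C \<ge> 0" and D: "D \<ge> 0"
    and f_le: "\<And>s. s \<in> {0<..<r} \<Longrightarrow> f s \<le> C * h (r - s)"
    and h_int: "(\<integral>\<^sup>+ s\<in>{0<..<r}. ennreal (h s) \<partial>lborel) \<le> ennreal D"
  shows "(\<integral>\<^sup>+ s. ennreal (indicator {0..r} s * f s) \<partial>lborel) \<le> ennreal (C * D)"
  unfolding nn_integral_atLeastAtMost_reflect[OF f]
proof (cases "C = 0")
  case True
  then have "ennreal (indicator {0<..<r} u * f (r - u)) = 0" for u
    using f_le[of "r - u"] by (auto simp: indicator_def ennreal_eq_0_iff)
  then show "(\<integral>\<^sup>+ u. ennreal (indicator {0<..<r} u * f (r - u)) \<partial>lborel) \<le> ennreal (C * D)"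
    by simp
next
  case False
  with C have C_pos: "C > 0" by simp
  text \<open>\<open>h\<close> need not be measurable, so the constant \<open>C\<close> is pulled out of the integral of \<open>f\<close>.\<close>
  have "ennreal (indicator {0<..<r} u * f (r - u))
      = ennreal C * ennreal (indicator {0<..<r} u * f (r - u) / C)" for u
  proof (cases "indicator {0<..<r} u * f (r - u) \<ge> 0")
    case True then show ?thesis using C_pos by (simp add: ennreal_mult[symmetric])
  next
    case False
    then have "indicator {0<..<r} u * f (r - u) / C \<le> 0" using C_pos by (simp add: divide_nonpos_pos)
    then show ?thesis using False by (simp add: ennreal_neg)
  qed
  then have "(\<integral>\<^sup>+ u. ennreal (indicator {0<..<r} u * f (r - u)) \<partial>lborel)
      = (\<integral>\<^sup>+ u. ennreal C * ennreal (indicator {0<..<r} u * f (r - u) / C) \<partial>lborel)"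
    by simp
  also have "\<dots> = ennreal C * (\<integral>\<^sup>+ u. ennreal (indicator {0<..<r} u * f (r - u) / C) \<partial>lborel)"
    by (rule nn_integral_cmult) (use f in measurable)
  also have "(\<integral>\<^sup>+ u. ennreal (indicator {0<..<r} u * f (r - u) / C) \<partial>lborel)
      \<le> (\<integral>\<^sup>+ s\<in>{0<..<r}. ennreal (h s) \<partial>lborel)"
  proof (rule nn_integral_mono)
    fix u
    show "ennreal (indicator {0<..<r} u * f (r - u) / C) \<le> ennreal (h u) * indicator {0<..<r} u"
    proof (cases "u \<in> {0<..<r}")
      case True
      then have "f (r - u) \<le> C * h u" using f_le[of "r - u"] by auto
      then have "f (r - u) / C \<le> h u" using C_pos by (simp add: divide_le_eq mult.commute)
      then show ?thesis using True by (simp add: ennreal_leI)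
    qed simp
  qed
  also note h_int
  finally show "(\<integral>\<^sup>+ u. ennreal (indicator {0<..<r} u * f (r - u)) \<partial>lborel) \<le> ennreal (C * D)"
    using C D by (simp add: ennreal_mult[symmetric] mult_left_mono)
qed

lemma set_integral_bound_by_nn_integral:
  fixes f :: "real \<Rightarrow> 'b::{banach, second_countable_topology}"
  assumes f: "f \<in> borel_measurable borel" and A: "A \<in> sets borel" and B: "B \<ge> 0"
    and nn: "(\<integral>\<^sup>+ s. ennreal (indicator A s * norm (f s)) \<partial>lborel) \<le> ennreal B"
  shows "set_integrable lborel A f" "norm (LINT s:A|lborel. f s) \<le> B"
proof -
  have norm_eq: "ennreal (norm (indicator A s *\<^sub>R f s)) = ennreal (indicator A s * norm (f s))" for s
    by (auto simp: indicator_def)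
  show "set_integrable lborel A f"
    unfolding set_integrable_def
  proof (rule integrableI_bounded)
    show "(\<lambda>s. indicator A s *\<^sub>R f s) \<in> borel_measurable lborel" using f A by measurable
    show "(\<integral>\<^sup>+ s. ennreal (norm (indicator A s *\<^sub>R f s)) \<partial>lborel) < \<infinity>"
      unfolding norm_eq using nn by (simp add: le_less_trans)
  qed
  have "norm (LINT s:A|lborel. f s) \<le> (\<integral>s. norm (indicator A s *\<^sub>R f s) \<partial>lborel)"
    unfolding set_lebesgue_integral_def by (rule integral_norm_bound)
  also have "\<dots> \<le> B"
    by (rule integral_real_bounded[OF B]) (use nn norm_eq in simp)
  finally show "norm (LINT s:A|lborel. f s) \<le> B" .
qed

lemma set_integral_bounded_atLeastAtMost:
  fixes f :: "real \<Rightarrow> 'b::{banach, second_countable_topology}"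
  assumes f: "f \<in> borel_measurable borel" and "a \<le> b" and "B \<ge> 0"
    and f_le: "\<And>r. r \<in> {a..b} \<Longrightarrow> norm (f r) \<le> B"
  shows "set_integrable lborel {a..b} f" "norm (LINT r:{a..b}|lborel. f r) \<le> B * (b - a)"
proof -
  have "(\<integral>\<^sup>+ s. ennreal (indicator {a..b} s * norm (f s)) \<partial>lborel)
      \<le> (\<integral>\<^sup>+ s. ennreal B * indicator {a..b} s \<partial>lborel)"
    by (rule nn_integral_mono) (auto simp: indicator_def f_le ennreal_leI)
  also have "\<dots> = ennreal (B * (b - a))"
    using assms by (simp add: nn_integral_cmult_indicator ennreal_mult)
  finally have nn: "(\<integral>\<^sup>+ s. ennreal (indicator {a..b} s * norm (f s)) \<partial>lborel) \<le> ennreal (B * (b - a))" .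
  show "set_integrable lborel {a..b} f" "norm (LINT r:{a..b}|lborel. f r) \<le> B * (b - a)"
    using set_integral_bound_by_nn_integral[OF f _ _ nn] assms by auto
qed

lemma set_integral_exp:
  fixes l A t :: real
  assumes l: "l > 0" and t: "0 \<le> t"
  shows "set_integrable lborel {0..t} (\<lambda>r. A * exp (l * r))"
    "(LINT r:{0..t}|lborel. A * exp (l * r)) = A * (exp (l * t) - 1) / l"
proof -
  have cont: "continuous_on {0..t} (\<lambda>r. A * exp (l * r))" by (intro continuous_intros)
  show "set_integrable lborel {0..t} (\<lambda>r. A * exp (l * r))"
    by (rule borel_integrable_atLeastAtMost'[OF cont])
  have "((\<lambda>r. A * exp (l * r) / l) has_real_derivative A * exp (l * x)) (at x within {0..t})" for x
    using l by (auto intro!: derivative_eq_intros)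
  then have "(\<integral>r. indicator {0..t} r *\<^sub>R (A * exp (l * r)) \<partial>lborel) = A * exp (l * t) / l - A * exp (l * 0) / l"
    by (intro integral_FTC_atLeastAtMost[OF t _ cont]) (simp add: has_real_derivative_iff_has_vector_derivative)
  then show "(LINT r:{0..t}|lborel. A * exp (l * r)) = A * (exp (l * t) - 1) / l"
    unfolding set_lebesgue_integral_def by (simp add: diff_divide_distrib right_diff_distrib)
qed

lemma geometric_increments_LIMSEQ:
  fixes x :: "nat \<Rightarrow> 'b::banach"
  assumes increments: "\<And>n. norm (x (Suc n) - x n) \<le> C * (1/2)^n"
  shows "x \<longlonglongrightarrow> lim x" "\<And>n. norm (lim x - x n) \<le> 2 * C * (1/2)^n"
proof -
  let ?d = "\<lambda>k. x (Suc k) - x k"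
  have geometric: "summable (\<lambda>k. C * (1/2::real)^k)" by (intro summable_mult summable_geometric) simp
  have norm_summable: "summable (\<lambda>k. norm (?d k))"
    by (rule summable_comparison_test'[OF geometric, of 0]) (use increments in simp)
  then have summable: "summable ?d" by (rule summable_norm_cancel)
  have telescope: "x n = x 0 + (\<Sum>k<n. ?d k)" for n by (simp add: sum_lessThan_telescope)
  have "(\<lambda>n. x 0 + (\<Sum>k<n. ?d k)) \<longlonglongrightarrow> x 0 + suminf ?d"
    by (intro tendsto_add tendsto_const summable_LIMSEQ summable)
  then have conv: "x \<longlonglongrightarrow> x 0 + suminf ?d" by (simp add: telescope[symmetric])
  then have lim_eq: "lim x = x 0 + suminf ?d" by (rule limI)
  show "x \<longlonglongrightarrow> lim x" using conv lim_eq by simp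
  fix n
  have "lim x - x n = suminf ?d - (\<Sum>k<n. ?d k)" by (simp add: lim_eq telescope[of n])
  also have "\<dots> = (\<Sum>k. ?d (k + n))" by (rule suminf_minus_initial_segment[OF summable, symmetric])
  finally have tail: "lim x - x n = (\<Sum>k. ?d (k + n))" .
  have tail_summable: "summable (\<lambda>k. norm (?d (k + n)))"
    using norm_summable by (rule summable_ignore_initial_segment)
  have "norm (\<Sum>k. ?d (k + n)) \<le> (\<Sum>k. norm (?d (k + n)))" by (rule summable_norm[OF tail_summable])
  also have "\<dots> \<le> (\<Sum>k. C * (1/2::real)^(k + n))"
    by (rule suminf_le[OF _ tail_summable summable_ignore_initial_segment[OF geometric]])
      (use increments in simp)
  also have "\<dots> = C * (1/2)^n * (\<Sum>k. (1/2::real)^k)"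
    by (subst suminf_mult[symmetric]) (auto simp: power_add mult_ac)
  also have "\<dots> = 2 * C * (1/2)^n" by (simp add: suminf_geometric)
  finally show "norm (lim x - x n) \<le> 2 * C * (1/2)^n" unfolding tail .
qed

lemma le_mult_exp: "0 \<le> (c::real) \<Longrightarrow> 0 \<le> x \<Longrightarrow> c \<le> c * exp x"
  using mult_left_mono[of 1 "exp x" c] by simp

locale mckean_vlasov =
  fixes T D :: real
    and L :: "real \<Rightarrow> real ^ 'd \<Rightarrow> real ^ 'd"
    and h1 h2 :: "real \<Rightarrow> real"
    and M :: "'a measure" and F :: "real \<Rightarrow> 'a measure"
    and W :: "real \<Rightarrow> 'a \<Rightarrow> real ^ 'd" and X0 :: "'a \<Rightarrow> real ^ 'd"
  assumes T_pos: "T > 0"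
    and L_measurable: "(\<lambda>(t, x). L t x) \<in> borel_measurable (restrict_space borel ({0..T} \<times> UNIV))"
    and L_bounded: "\<And>t x. t \<in> {0<..<T} \<Longrightarrow> norm (L t x) \<le> h1 t"
    and L_lipschitz: "\<And>t x y. t \<in> {0<..<T} \<Longrightarrow> norm (L t x - L t y) \<le> h2 t * norm (x - y)"
    and h2_nonneg: "\<And>t. t \<in> {0<..<T} \<Longrightarrow> h2 t \<ge> 0"
    and D_pos: "D > 0"
    and h1_integral: "\<And>t. t \<le> T \<Longrightarrow> (\<integral>\<^sup>+ s\<in>{0<..<t}. ennreal (h1 s) \<partial>lborel) \<le> ennreal D"
    and h2_integral: "\<And>t. t \<le> T \<Longrightarrow> (\<integral>\<^sup>+ s\<in>{0<..<t}. ennreal (h2 s) \<partial>lborel) \<le> ennreal D"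
    and filtered: "filtered_space M F"
    and brownian: "brownian_motion M F T W"
    and X0_measurable: "X0 \<in> borel_measurable (F 0)"
begin

lemma prob_space_M: "prob_space M"
  using filtered by (simp add: filtered_space_def)

lemma space_F: "space (F t) = space M"
  using filtered by (simp add: filtered_space_def filtration_def)

lemma measurable_F_imp_M: "f \<in> measurable (F t) N \<Longrightarrow> f \<in> measurable M N"
  using filtered
  by (intro measurable_from_subalg[of M "F t"]) (auto simp: subalgebra_def space_F filtered_space_def)

lemma measurable_F_mono: "s \<le> t \<Longrightarrow> f \<in> measurable (F s) N \<Longrightarrow> f \<in> measurable (F t) N"
  using filtered
  by (intro measurable_from_subalg[of "F t" "F s"]) (auto simp: subalgebra_def space_F filtered_space_def filtration_def)

definition L_ext :: "real \<Rightarrow> real ^ 'd \<Rightarrow> real ^ 'd"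
  where "L_ext t x = (if t \<in> {0..T} then L t x else 0)"

lemma L_ext_measurable: "(\<lambda>p. L_ext (fst p) (snd p)) \<in> borel_measurable (borel \<Otimes>\<^sub>M borel)"
proof -
  have closed: "{0..T} \<times> UNIV \<inter> space borel \<in> sets (borel :: (real \<times> (real^'d)) measure)"
    by (intro sets.Int borel_closed closed_Times) auto
  have "(\<lambda>x. indicator ({0..T} \<times> UNIV) x *\<^sub>R (case x of (t, x) \<Rightarrow> L t x))
      \<in> borel_measurable (borel :: (real \<times> (real^'d)) measure)"
    using borel_measurable_restrict_space_iff[OF closed] L_measurable by blast
  moreover have "(\<lambda>x. indicator ({0..T} \<times> UNIV) x *\<^sub>R (case x of (t, x) \<Rightarrow> L t x)) = (\<lambda>p. L_ext (fst p) (snd p))"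
    by (auto simp: fun_eq_iff L_ext_def indicator_def)
  ultimately show ?thesis by (simp add: borel_prod)
qed

lemma L_ext_measurable_comp[measurable (raw)]:
  "f \<in> borel_measurable N \<Longrightarrow> g \<in> borel_measurable N \<Longrightarrow> (\<lambda>x. L_ext (f x) (g x)) \<in> borel_measurable N"
  using measurable_compose[OF measurable_Pair L_ext_measurable, of f N g] by simp

definition admissible :: "(real \<Rightarrow> 'a \<Rightarrow> real ^ 'd) \<Rightarrow> bool" where
  "admissible Z \<longleftrightarrow> (\<forall>t\<in>{0..T}. Z t \<in> borel_measurable (F t)) \<and>
     (\<forall>\<omega>\<in>space M. continuous_on {0..T} (\<lambda>t. Z t \<omega>))"

lemma admissible_measurable: "admissible Z \<Longrightarrow> t \<in> {0..T} \<Longrightarrow> Z t \<in> borel_measurable M"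
  unfolding admissible_def using measurable_F_imp_M by blast

lemma admissible_progressive:
  "admissible Z \<Longrightarrow> t \<in> {0..T} \<Longrightarrow> (\<lambda>(\<omega>, s). Z (clamp 0 t s) \<omega>) \<in> borel_measurable (F t \<Otimes>\<^sub>M borel)"
  unfolding admissible_def
  by (intro borel_measurable_clamped_process)
    (auto simp: space_F intro: measurable_F_mono elim!: continuous_on_subset)

lemma admissible_jointly_measurable:
  "admissible Z \<Longrightarrow> (\<lambda>(\<omega>, s). Z (clamp 0 T s) \<omega>) \<in> borel_measurable (M \<Otimes>\<^sub>M borel)"
  using T_pos unfolding admissible_def
  by (intro borel_measurable_clamped_process) (auto intro: measurable_F_imp_M elim!: continuous_on_subset)

text \<open>\<open>interaction Z r s x = \<integral> L(r - s, x - y) \<QQ>\<^sub>s(dy)\<close> with \<open>\<QQ>\<^sub>s\<close> the law of \<open>Z\<^sub>s\<close>, written as an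
  expectation; clamping the time makes it jointly measurable in \<open>(r, s, x)\<close>.\<close>
definition interaction :: "(real \<Rightarrow> 'a \<Rightarrow> real ^ 'd) \<Rightarrow> real \<Rightarrow> real \<Rightarrow> real ^ 'd \<Rightarrow> real ^ 'd" where
  "interaction Z r s x = (\<integral>\<omega>. L_ext (r - s) (x - Z (clamp 0 T s) \<omega>) \<partial>M)"

definition drift_field :: "(real \<Rightarrow> 'a \<Rightarrow> real ^ 'd) \<Rightarrow> real \<Rightarrow> real ^ 'd \<Rightarrow> real ^ 'd" where
  "drift_field Z r x = (LINT s:{0..r}|lborel. interaction Z r s x)"

lemma interaction_measurable:
  assumes Z: "admissible Z"
  shows "(\<lambda>y. interaction Z (fst (fst y)) (snd (fst y)) (snd y))
    \<in> borel_measurable ((borel \<Otimes>\<^sub>M borel) \<Otimes>\<^sub>M borel)"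
proof -
  interpret prob_space M by (rule prob_space_M)
  let ?N = "((borel::real measure) \<Otimes>\<^sub>M (borel::real measure)) \<Otimes>\<^sub>M (borel :: (real^'d) measure)"
  have "(\<lambda>q. (\<lambda>(\<omega>, s). Z (clamp 0 T s) \<omega>) (snd q, snd (fst (fst q)))) \<in> borel_measurable (?N \<Otimes>\<^sub>M M)"
    by (rule measurable_compose[OF _ admissible_jointly_measurable[OF Z]]) measurable
  then have [measurable]: "(\<lambda>q. Z (clamp 0 T (snd (fst (fst q)))) (snd q)) \<in> borel_measurable (?N \<Otimes>\<^sub>M M)"
    by simp
  have "case_prod (\<lambda>y \<omega>. L_ext (fst (fst y) - snd (fst y)) (snd y - Z (clamp 0 T (snd (fst y))) \<omega>))
      \<in> borel_measurable (?N \<Otimes>\<^sub>M M)"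
    unfolding case_prod_beta by measurable
  then show ?thesis unfolding interaction_def by (rule borel_measurable_lebesgue_integral)
qed

lemma interaction_measurable_time: "admissible Z \<Longrightarrow> (\<lambda>s. interaction Z r s x) \<in> borel_measurable borel"
  using measurable_compose[OF _ interaction_measurable, of "\<lambda>s. ((r, s), x)" borel Z] by simp

lemma drift_field_measurable:
  assumes Z: "admissible Z"
  shows "(\<lambda>y. drift_field Z (fst y) (snd y)) \<in> borel_measurable (borel \<Otimes>\<^sub>M borel)"
proof -
  let ?N = "(borel::real measure) \<Otimes>\<^sub>M (borel :: (real^'d) measure)"
  have "(\<lambda>q. (\<lambda>y. interaction Z (fst (fst y)) (snd (fst y)) (snd y)) ((fst (fst q), snd q), snd (fst q)))
      \<in> borel_measurable (?N \<Otimes>\<^sub>M borel)"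
    by (rule measurable_compose[OF _ interaction_measurable[OF Z]]) measurable
  then have [measurable]: "(\<lambda>q. interaction Z (fst (fst q)) (snd q) (snd (fst q))) \<in> borel_measurable (?N \<Otimes>\<^sub>M borel)"
    by simp
  have "case_prod (\<lambda>y s. indicator {0..fst y} s *\<^sub>R interaction Z (fst y) s (snd y)) \<in> borel_measurable (?N \<Otimes>\<^sub>M borel)"
    unfolding case_prod_beta indicator_def of_bool_def atLeastAtMost_iff mem_Collect_eq by measurable
  moreover have "measurable (?N \<Otimes>\<^sub>M lborel) (borel :: (real^'d) measure) = measurable (?N \<Otimes>\<^sub>M borel) borel"
    by (intro measurable_cong_sets sets_pair_measure_cong) auto
  ultimately have "case_prod (\<lambda>y s. indicator {0..fst y} s *\<^sub>R interaction Z (fst y) s (snd y))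
      \<in> borel_measurable (?N \<Otimes>\<^sub>M lborel)"
    by simp
  then show ?thesis unfolding drift_field_def set_lebesgue_integral_def
    by (rule lborel.borel_measurable_lebesgue_integral)
qed

lemma interaction_integrable:
  assumes Z: "admissible Z" and s: "s \<in> {0<..<r}" and r: "r \<le> T"
  shows "integrable M (\<lambda>\<omega>. L_ext (r - s) (x - Z (clamp 0 T s) \<omega>))"
proof -
  interpret prob_space M by (rule prob_space_M)
  have rs: "r - s \<in> {0<..<T}" using s r by auto
  have [measurable]: "Z (clamp 0 T s) \<in> borel_measurable M"
    using T_pos s r by (intro admissible_measurable[OF Z]) (auto simp: clamp_real_id)
  show ?thesis
  proof (rule integrable_const_bound[where B="h1 (r - s)"])
    show "AE \<omega> in M. norm (L_ext (r - s) (x - Z (clamp 0 T s) \<omega>)) \<le> h1 (r - s)"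
      using rs L_bounded by (auto simp: L_ext_def)
  qed measurable
qed

lemma norm_interaction_le:
  assumes "s \<in> {0<..<r}" and "r \<le> T"
  shows "norm (interaction Z r s x) \<le> h1 (r - s)"
  unfolding interaction_def
  by (rule prob_space.norm_integral_le_AE_bound[OF prob_space_M])
    (use assms L_bounded in \<open>auto simp: L_ext_def\<close>)

lemma drift_field_bounded:
  assumes Z: "admissible Z" and r: "0 \<le> r" "r \<le> T"
  shows "set_integrable lborel {0..r} (\<lambda>s. interaction Z r s x)" "norm (drift_field Z r x) \<le> D"
proof -
  have "(\<integral>\<^sup>+ s. ennreal (indicator {0..r} s * norm (interaction Z r s x)) \<partial>lborel) \<le> ennreal (1 * D)"
  proof (rule nn_integral_reflected_bound)
    show "(\<lambda>s. norm (interaction Z r s x)) \<in> borel_measurable borel"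
      using interaction_measurable_time[OF Z] by measurable
    show "norm (interaction Z r s x) \<le> 1 * h1 (r - s)" if "s \<in> {0<..<r}" for s
      using norm_interaction_le[OF that r(2)] by simp
  qed (use D_pos h1_integral r in auto)
  then show "set_integrable lborel {0..r} (\<lambda>s. interaction Z r s x)" "norm (drift_field Z r x) \<le> D"
    unfolding drift_field_def
    by (intro set_integral_bound_by_nn_integral[OF interaction_measurable_time[OF Z]], use D_pos in auto)+
qed

text \<open>The laws enter only through expectations, so an almost sure bound at each time suffices.\<close>
lemma norm_interaction_diff_le:
  assumes Z: "admissible Z" and Z': "admissible Z'" and s: "s \<in> {0<..<r}" and r: "r \<le> T"
    and close: "AE \<omega> in M. norm (Z s \<omega> - Z' s \<omega>) \<le> c"
  shows "norm (interaction Z r s x - interaction Z' r s x') \<le> (norm (x - x') + c) * h2 (r - s)"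
proof -
  let ?C = "norm (x - x') + c"
  have rs: "r - s \<in> {0<..<T}" using s r by auto
  have clamp_s: "clamp 0 T s = s" using s r by (intro clamp_real_id) auto
  have "interaction Z r s x - interaction Z' r s x'
      = (\<integral>\<omega>. L_ext (r - s) (x - Z s \<omega>) - L_ext (r - s) (x' - Z' s \<omega>) \<partial>M)"
    unfolding interaction_def
    using interaction_integrable[OF Z s r] interaction_integrable[OF Z' s r]
    by (simp add: clamp_s)
  also have "norm \<dots> \<le> h2 (r - s) * ?C"
    using close
  proof (intro prob_space.norm_integral_le_AE_bound[OF prob_space_M], eventually_elim)
    case (elim \<omega>)
    have "norm ((x - Z s \<omega>) - (x' - Z' s \<omega>)) \<le> norm (x - x') + norm (Z s \<omega> - Z' s \<omega>)"
      using norm_triangle_ineq4[of "x - x'" "Z s \<omega> - Z' s \<omega>"] by (simp add: algebra_simps)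
    then have "h2 (r - s) * norm ((x - Z s \<omega>) - (x' - Z' s \<omega>)) \<le> h2 (r - s) * ?C"
      using elim h2_nonneg[OF rs] by (intro mult_left_mono) auto
    with L_lipschitz[OF rs] rs show ?case
      by (simp add: L_ext_def) (meson order_trans)
  qed
  finally show ?thesis by (simp add: mult.commute)
qed

lemma drift_field_lipschitz:
  assumes Z: "admissible Z" and Z': "admissible Z'" and r: "0 \<le> r" "r \<le> T" and c: "c \<ge> 0"
    and close: "\<And>s. s \<in> {0..r} \<Longrightarrow> AE \<omega> in M. norm (Z s \<omega> - Z' s \<omega>) \<le> c"
  shows "norm (drift_field Z r x - drift_field Z' r x') \<le> D * (norm (x - x') + c)"
proof -
  let ?C = "norm (x - x') + c"
  have diff_eq: "drift_field Z r x - drift_field Z' r x'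
      = (LINT s:{0..r}|lborel. interaction Z r s x - interaction Z' r s x')"
    unfolding drift_field_def
    by (rule set_integral_diff(2)[symmetric]) (use drift_field_bounded[OF Z r] drift_field_bounded[OF Z' r] in auto)
  have "norm (interaction Z r s x - interaction Z' r s x') \<le> ?C * h2 (r - s)" if s: "s \<in> {0<..<r}" for s
    using s r by (intro norm_interaction_diff_le[OF Z Z'] close) auto
  then have "(\<integral>\<^sup>+ s. ennreal (indicator {0..r} s * norm (interaction Z r s x - interaction Z' r s x')) \<partial>lborel)
      \<le> ennreal (?C * D)"
    using D_pos h2_integral r c interaction_measurable_time[OF Z] interaction_measurable_time[OF Z']
    by (intro nn_integral_reflected_bound) (auto simp del: greaterThanLessThan_iff)
  then have "norm (LINT s:{0..r}|lborel. interaction Z r s x - interaction Z' r s x') \<le> ?C * D"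
    using D_pos c interaction_measurable_time[OF Z] interaction_measurable_time[OF Z']
    by (intro set_integral_bound_by_nn_integral(2)) auto
  then show ?thesis unfolding diff_eq by (simp add: mult.commute)
qed

lemma mv_drift_eq_drift_field:
  assumes Z: "admissible Z" and r: "r \<in> {0..T}"
  shows "mv_drift M L Z r \<omega> = drift_field Z r (Z r \<omega>)"
  unfolding mv_drift_def drift_field_def
proof (rule set_lebesgue_integral_cong, simp, intro allI impI)
  fix s assume s: "s \<in> {0..r}"
  have rs: "r - s \<in> {0..T}" using s r by auto
  have Z_s: "Z s \<in> borel_measurable M" using s r by (intro admissible_measurable[OF Z]) auto
  have L_ext_s: "(\<lambda>y. L_ext (r - s) (Z r \<omega> - y)) \<in> borel_measurable borel" by measurable
  have "(\<integral>y. L (r - s) (Z r \<omega> - y) \<partial>distr M borel (Z s)) = (\<integral>y. L_ext (r - s) (Z r \<omega> - y) \<partial>distr M borel (Z s))"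
    using rs by (simp add: L_ext_def)
  also have "\<dots> = (\<integral>\<omega>'. L_ext (r - s) (Z r \<omega> - Z s \<omega>') \<partial>M)"
    by (rule integral_distr[OF Z_s L_ext_s])
  finally show "(\<integral>y. L (r - s) (Z r \<omega> - y) \<partial>distr M borel (Z s)) = interaction Z r s (Z r \<omega>)"
    using s r by (simp add: interaction_def clamp_real_id)
qed

lemma mv_drift_lipschitz:
  assumes Z: "admissible Z" and Z': "admissible Z'" and r: "r \<in> {0..T}" and c: "c \<ge> 0"
    and close: "\<And>s. s \<in> {0..r} \<Longrightarrow> AE \<omega> in M. norm (Z s \<omega> - Z' s \<omega>) \<le> c"
    and close_at_r: "norm (Z r \<omega> - Z' r \<omega>) \<le> c"
  shows "norm (mv_drift M L Z r \<omega> - mv_drift M L Z' r \<omega>) \<le> 2 * D * c"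
proof -
  have "norm (mv_drift M L Z r \<omega> - mv_drift M L Z' r \<omega>) \<le> D * (norm (Z r \<omega> - Z' r \<omega>) + c)"
    unfolding mv_drift_eq_drift_field[OF Z r] mv_drift_eq_drift_field[OF Z' r]
    using r by (intro drift_field_lipschitz[OF Z Z' _ _ c close]) auto
  also have "\<dots> \<le> D * (c + c)" using close_at_r D_pos by (intro mult_left_mono) auto
  finally show ?thesis by simp
qed

lemma mv_drift_eq_clamped:
  assumes Z: "admissible Z" and t: "t \<in> {0..T}" and r: "r \<in> {0..t}"
  shows "mv_drift M L Z r \<omega> = drift_field Z r (Z (clamp 0 t r) \<omega>)"
  using mv_drift_eq_drift_field[OF Z, of r] clamp_real_id[OF r] r t by simp

lemma mv_drift_path_measurable:
  assumes Z: "admissible Z" and t: "t \<in> {0..T}" and \<omega>: "\<omega> \<in> space M"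
  shows "(\<lambda>r. drift_field Z r (Z (clamp 0 t r) \<omega>)) \<in> borel_measurable borel"
proof -
  have "(\<lambda>r. (\<lambda>(\<omega>, s). Z (clamp 0 t s) \<omega>) (\<omega>, r)) \<in> borel_measurable borel"
    by (rule measurable_Pair2[OF admissible_progressive[OF Z t]]) (simp add: space_F \<omega>)
  then have "(\<lambda>r. (\<lambda>y. drift_field Z (fst y) (snd y)) (r, Z (clamp 0 t r) \<omega>)) \<in> borel_measurable borel"
    by (intro measurable_compose[OF _ drift_field_measurable[OF Z]]) simp
  then show ?thesis by simp
qed

lemma mv_drift_path_integrable:
  assumes Z: "admissible Z" and t: "t \<in> {0..T}" and \<omega>: "\<omega> \<in> space M"
  shows "set_integrable lborel {0..t} (\<lambda>r. mv_drift M L Z r \<omega>)"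
    "norm (LINT r:{0..t}|lborel. mv_drift M L Z r \<omega>) \<le> D * t"
proof -
  have "norm (drift_field Z r (Z (clamp 0 t r) \<omega>)) \<le> D" if "r \<in> {0..t}" for r
    using that t by (intro drift_field_bounded(2)[OF Z]) auto
  then have "set_integrable lborel {0..t} (\<lambda>r. drift_field Z r (Z (clamp 0 t r) \<omega>))"
    "norm (LINT r:{0..t}|lborel. drift_field Z r (Z (clamp 0 t r) \<omega>)) \<le> D * (t - 0)"
    using t D_pos by (intro set_integral_bounded_atLeastAtMost[OF mv_drift_path_measurable[OF Z t \<omega>]]; auto)+
  moreover have "set_integrable lborel {0..t} (\<lambda>r. mv_drift M L Z r \<omega>)
      = set_integrable lborel {0..t} (\<lambda>r. drift_field Z r (Z (clamp 0 t r) \<omega>))"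
    by (rule set_integrable_cong[OF refl refl mv_drift_eq_clamped[OF Z t]])
  moreover have "(LINT r:{0..t}|lborel. mv_drift M L Z r \<omega>)
      = (LINT r:{0..t}|lborel. drift_field Z r (Z (clamp 0 t r) \<omega>))"
    using mv_drift_eq_clamped[OF Z t] by (intro set_lebesgue_integral_cong) auto
  ultimately show "set_integrable lborel {0..t} (\<lambda>r. mv_drift M L Z r \<omega>)"
    "norm (LINT r:{0..t}|lborel. mv_drift M L Z r \<omega>) \<le> D * t"
    by (simp_all only: diff_zero)
qed

definition drift_integral :: "(real \<Rightarrow> 'a \<Rightarrow> real ^ 'd) \<Rightarrow> real \<Rightarrow> 'a \<Rightarrow> real ^ 'd" where
  "drift_integral Z t \<omega> = (LINT r:{0..t}|lborel. mv_drift M L Z r \<omega>)"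

definition picard :: "(real \<Rightarrow> 'a \<Rightarrow> real ^ 'd) \<Rightarrow> real \<Rightarrow> 'a \<Rightarrow> real ^ 'd" where
  "picard Z t \<omega> = X0 \<omega> + W t \<omega> + drift_integral Z t \<omega>"

lemma drift_integral_measurable:
  assumes Z: "admissible Z" and t: "t \<in> {0..T}"
  shows "drift_integral Z t \<in> borel_measurable (F t)"
proof -
  have "(\<lambda>q. (\<lambda>y. drift_field Z (fst y) (snd y)) (snd q, (\<lambda>(\<omega>, s). Z (clamp 0 t s) \<omega>) q))
      \<in> borel_measurable (F t \<Otimes>\<^sub>M borel)"
    by (rule measurable_compose[OF _ drift_field_measurable[OF Z]])
      (use admissible_progressive[OF Z t] in measurable)
  then have [measurable]: "(\<lambda>q. drift_field Z (snd q) (Z (clamp 0 t (snd q)) (fst q))) \<in> borel_measurable (F t \<Otimes>\<^sub>M borel)"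
    by (simp add: case_prod_beta)
  have "case_prod (\<lambda>\<omega> r. indicator {0..t} r *\<^sub>R drift_field Z r (Z (clamp 0 t r) \<omega>)) \<in> borel_measurable (F t \<Otimes>\<^sub>M borel)"
    unfolding case_prod_beta by measurable
  moreover have "measurable (F t \<Otimes>\<^sub>M lborel) (borel :: (real^'d) measure) = measurable (F t \<Otimes>\<^sub>M borel) borel"
    by (intro measurable_cong_sets sets_pair_measure_cong) auto
  ultimately have "(\<lambda>\<omega>. LINT r:{0..t}|lborel. drift_field Z r (Z (clamp 0 t r) \<omega>)) \<in> borel_measurable (F t)"
    unfolding set_lebesgue_integral_def by (intro lborel.borel_measurable_lebesgue_integral) simp
  moreover have "(LINT r:{0..t}|lborel. drift_field Z r (Z (clamp 0 t r) \<omega>)) = drift_integral Z t \<omega>" for \<omega>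
    unfolding drift_integral_def using mv_drift_eq_clamped[OF Z t] by (intro set_lebesgue_integral_cong) auto
  ultimately show ?thesis by simp
qed

lemma drift_integral_continuous:
  assumes Z: "admissible Z" and \<omega>: "\<omega> \<in> space M"
  shows "continuous_on {0..T} (\<lambda>t. drift_integral Z t \<omega>)"
proof -
  have "(\<lambda>r. mv_drift M L Z r \<omega>) integrable_on {0..T}"
    using mv_drift_path_integrable(1)[OF Z _ \<omega>, of T] T_pos
    by (intro set_borel_integral_eq_integral(1)) auto
  then have "continuous_on {0..T} (\<lambda>t. integral {0..t} (\<lambda>r. mv_drift M L Z r \<omega>))"
    by (rule indefinite_integral_continuous_1)
  moreover have integral_eq: "drift_integral Z t \<omega> = integral {0..t} (\<lambda>r. mv_drift M L Z r \<omega>)"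
    if "t \<in> {0..T}" for t
    unfolding drift_integral_def
    by (rule set_borel_integral_eq_integral(2)[OF mv_drift_path_integrable(1)[OF Z that \<omega>]])
  ultimately show ?thesis by (simp only: continuous_on_cong[OF refl integral_eq])
qed

lemma X0_measurable_F: "t \<in> {0..T} \<Longrightarrow> X0 \<in> borel_measurable (F t)"
  by (rule measurable_F_mono[OF _ X0_measurable]) auto

lemma brownian_adapted: "t \<in> {0..T} \<Longrightarrow> W t \<in> borel_measurable (F t)"
  and brownian_continuous: "\<omega> \<in> space M \<Longrightarrow> continuous_on {0..T} (\<lambda>t. W t \<omega>)"
  using brownian by (auto simp: brownian_motion_def)

lemma admissible_noise: "admissible (\<lambda>t \<omega>. X0 \<omega> + W t \<omega>)"
  unfolding admissible_def
  by (intro conjI ballI borel_measurable_add continuous_intros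
      X0_measurable_F brownian_adapted brownian_continuous)

lemma admissible_picard: "admissible Z \<Longrightarrow> admissible (picard Z)"
  unfolding admissible_def[of "picard Z"] picard_def
  by (intro conjI ballI borel_measurable_add continuous_intros X0_measurable_F brownian_adapted
      brownian_continuous drift_integral_measurable drift_integral_continuous)

text \<open>Integrating the drift difference \<open>2 D K e\<^sup>4\<^sup>D\<^sup>r\<close> over \<open>[0, t]\<close> gives
  \<open>K/2 (e\<^sup>4\<^sup>D\<^sup>t - 1)\<close>: the rate \<open>4 D\<close> of the weight is chosen to halve the bound.\<close>
lemma drift_integral_contraction:
  assumes Z: "admissible Z" and Z': "admissible Z'" and K: "K \<ge> 0" and t: "t \<in> {0..T}" and \<omega>: "\<omega> \<in> space M"
    and close: "\<And>s. s \<in> {0..T} \<Longrightarrow> AE \<omega>' in M. norm (Z s \<omega>' - Z' s \<omega>') \<le> K * exp (4 * D * s)"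
    and close_path: "\<And>r. r \<in> {0..t} \<Longrightarrow> norm (Z r \<omega> - Z' r \<omega>) \<le> K * exp (4 * D * r)"
  shows "norm (drift_integral Z t \<omega> - drift_integral Z' t \<omega>) \<le> K / 2 * exp (4 * D * t)"
proof -
  note integrable = mv_drift_path_integrable(1)[OF Z t \<omega>] mv_drift_path_integrable(1)[OF Z' t \<omega>]
  have t0: "0 \<le> t" and rate: "4 * D > 0" using t D_pos by auto
  have drift_close: "norm (mv_drift M L Z r \<omega> - mv_drift M L Z' r \<omega>) \<le> (2 * D * K) * exp (4 * D * r)"
    if r: "r \<in> {0..t}" for r
  proof -
    have "norm (mv_drift M L Z r \<omega> - mv_drift M L Z' r \<omega>) \<le> 2 * D * (K * exp (4 * D * r))"
    proof (rule mv_drift_lipschitz[OF Z Z'])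
      fix s assume s: "s \<in> {0..r}"
      have "K * exp (4 * D * s) \<le> K * exp (4 * D * r)"
        using s K D_pos by (intro mult_left_mono) auto
      moreover have "AE \<omega> in M. norm (Z s \<omega> - Z' s \<omega>) \<le> K * exp (4 * D * s)"
        using s r t by (intro close) auto
      ultimately show "AE \<omega> in M. norm (Z s \<omega> - Z' s \<omega>) \<le> K * exp (4 * D * r)"
        by (auto elim: eventually_mono)
    qed (use r t K close_path in auto)
    then show ?thesis by (simp add: mult.assoc)
  qed
  have "norm (drift_integral Z t \<omega> - drift_integral Z' t \<omega>)
      = norm (LINT r:{0..t}|lborel. mv_drift M L Z r \<omega> - mv_drift M L Z' r \<omega>)"
    unfolding drift_integral_def by (simp add: set_integral_diff(2)[OF integrable])
  also have "\<dots> \<le> (LINT r:{0..t}|lborel. norm (mv_drift M L Z r \<omega> - mv_drift M L Z' r \<omega>))"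
    by (rule set_integral_norm_bound) (rule set_integral_diff(1)[OF integrable])
  also have "\<dots> \<le> (LINT r:{0..t}|lborel. (2 * D * K) * exp (4 * D * r))"
    using set_integrable_norm[OF set_integral_diff(1)[OF integrable]] set_integral_exp(1)[OF rate t0]
    by (rule set_integral_mono) (rule drift_close)
  also have "\<dots> = (2 * D * K) * (exp (4 * D * t) - 1) / (4 * D)"
    by (rule set_integral_exp(2)[OF rate t0])
  also have "\<dots> = K / 2 * (exp (4 * D * t) - 1)"
    using D_pos by (simp add: field_simps)
  also have "\<dots> \<le> K / 2 * exp (4 * D * t)" using K by (intro mult_left_mono) auto
  finally show ?thesis .
qed

definition picard_iterate :: "nat \<Rightarrow> real \<Rightarrow> 'a \<Rightarrow> real ^ 'd" where
  "picard_iterate n = (picard ^^ n) (\<lambda>t \<omega>. X0 \<omega> + W t \<omega>)"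

lemma picard_iterate_Suc: "picard_iterate (Suc n) = picard (picard_iterate n)"
  by (simp add: picard_iterate_def)

lemma admissible_picard_iterate: "admissible (picard_iterate n)"
  by (induction n) (simp_all add: picard_iterate_def admissible_noise admissible_picard)

lemma picard_iterate_increment:
  "\<omega> \<in> space M \<Longrightarrow> t \<in> {0..T} \<Longrightarrow>
    norm (picard_iterate (Suc n) t \<omega> - picard_iterate n t \<omega>) \<le> (D * T) / 2^n * exp (4 * D * t)"
proof (induction n arbitrary: \<omega> t)
  case 0
  have "norm (picard_iterate (Suc 0) t \<omega> - picard_iterate 0 t \<omega>) = norm (drift_integral (picard_iterate 0) t \<omega>)"
    by (simp add: picard_iterate_Suc picard_def) (simp add: picard_iterate_def)
  also have "\<dots> \<le> D * t"
    unfolding drift_integral_def by (rule mv_drift_path_integrable(2)[OF admissible_picard_iterate 0(2,1)])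
  also have "\<dots> \<le> D * T * exp (4 * D * t)"
    using 0 D_pos T_pos by (intro order_trans[OF _ le_mult_exp]) auto
  finally show ?case by simp
next
  case (Suc n)
  have "norm (picard_iterate (Suc (Suc n)) t \<omega> - picard_iterate (Suc n) t \<omega>)
      = norm (drift_integral (picard_iterate (Suc n)) t \<omega> - drift_integral (picard_iterate n) t \<omega>)"
    by (simp add: picard_iterate_Suc[of "Suc n"] picard_iterate_Suc[of n] picard_def)
  also have "\<dots> \<le> ((D * T) / 2^n) / 2 * exp (4 * D * t)"
    using D_pos T_pos Suc
    by (intro drift_integral_contraction admissible_picard_iterate) auto
  finally show ?case by simp
qed

definition picard_limit :: "real \<Rightarrow> 'a \<Rightarrow> real ^ 'd" where
  "picard_limit t \<omega> = lim (\<lambda>n. picard_iterate n t \<omega>)"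

lemma picard_limit_LIMSEQ:
  assumes \<omega>: "\<omega> \<in> space M" and t: "t \<in> {0..T}"
  shows "(\<lambda>n. picard_iterate n t \<omega>) \<longlonglongrightarrow> picard_limit t \<omega>"
    "\<And>n. norm (picard_limit t \<omega> - picard_iterate n t \<omega>) \<le> 2 * (D * T * exp (4 * D * T)) * (1/2)^n"
proof -
  have "norm (picard_iterate (Suc n) t \<omega> - picard_iterate n t \<omega>) \<le> (D * T * exp (4 * D * T)) * (1/2)^n" for n
  proof -
    have "norm (picard_iterate (Suc n) t \<omega> - picard_iterate n t \<omega>) \<le> (D * T) / 2^n * exp (4 * D * t)"
      by (rule picard_iterate_increment[OF \<omega> t])
    also have "\<dots> \<le> (D * T) / 2^n * exp (4 * D * T)"
      using t D_pos T_pos by (intro mult_left_mono) auto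
    finally show ?thesis by (simp add: field_simps)
  qed
  then show "(\<lambda>n. picard_iterate n t \<omega>) \<longlonglongrightarrow> picard_limit t \<omega>"
    "\<And>n. norm (picard_limit t \<omega> - picard_iterate n t \<omega>) \<le> 2 * (D * T * exp (4 * D * T)) * (1/2)^n"
    unfolding picard_limit_def by (fact geometric_increments_LIMSEQ)+
qed

lemma picard_iterate_uniform_limit:
  assumes \<omega>: "\<omega> \<in> space M"
  shows "uniform_limit {0..T} (\<lambda>n t. picard_iterate n t \<omega>) (\<lambda>t. picard_limit t \<omega>) sequentially"
proof (rule uniform_limitI)
  fix e :: real assume e: "e > 0"
  let ?C = "2 * (D * T * exp (4 * D * T))"
  have "(\<lambda>n. ?C * (1/2::real)^n) \<longlonglongrightarrow> ?C * 0"
    by (intro tendsto_mult tendsto_const LIMSEQ_power_zero) simp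
  then have "\<forall>\<^sub>F n in sequentially. ?C * (1/2::real)^n < e"
    using e by (simp add: order_tendsto_iff)
  then show "\<forall>\<^sub>F n in sequentially. \<forall>t\<in>{0..T}. dist (picard_iterate n t \<omega>) (picard_limit t \<omega>) < e"
  proof (elim eventually_mono, intro ballI)
    fix n t assume "?C * (1/2::real)^n < e" and t: "t \<in> {0..T}"
    with picard_limit_LIMSEQ(2)[OF \<omega> t, of n]
    show "dist (picard_iterate n t \<omega>) (picard_limit t \<omega>) < e"
      by (simp add: dist_norm norm_minus_commute)
  qed
qed

lemma admissible_picard_limit: "admissible picard_limit"
  unfolding admissible_def
proof (intro conjI ballI)
  fix t assume t: "t \<in> {0..T}"
  show "picard_limit t \<in> borel_measurable (F t)"
  proof (rule borel_measurable_LIMSEQ_metric)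
    show "picard_iterate i t \<in> borel_measurable (F t)" for i
      using admissible_picard_iterate t by (auto simp: admissible_def)
    show "(\<lambda>i. picard_iterate i t \<omega>) \<longlonglongrightarrow> picard_limit t \<omega>" if "\<omega> \<in> space (F t)" for \<omega>
      using picard_limit_LIMSEQ(1)[OF _ t] that by (simp add: space_F)
  qed
next
  fix \<omega> assume \<omega>: "\<omega> \<in> space M"
  show "continuous_on {0..T} (\<lambda>t. picard_limit t \<omega>)"
    using admissible_picard_iterate \<omega>
    by (intro uniform_limit_theorem[OF _ picard_iterate_uniform_limit[OF \<omega>]])
      (auto simp: admissible_def)
qed

lemma drift_integral_picard_iterate_LIMSEQ:
  assumes \<omega>: "\<omega> \<in> space M" and t: "t \<in> {0..T}"
  shows "(\<lambda>n. drift_integral (picard_iterate n) t \<omega>) \<longlonglongrightarrow> drift_integral picard_limit t \<omega>"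
proof -
  let ?C = "2 * (D * T * exp (4 * D * T))"
  have close: "norm (picard_limit s \<omega>' - picard_iterate n s \<omega>') \<le> ?C * (1/2)^n * exp (4 * D * s)"
    if "s \<in> {0..T}" "\<omega>' \<in> space M" for n s \<omega>'
    using that D_pos T_pos
    by (intro order_trans[OF picard_limit_LIMSEQ(2)[OF that(2,1)] le_mult_exp]) auto
  have "(\<lambda>n. drift_integral picard_limit t \<omega> - drift_integral (picard_iterate n) t \<omega>) \<longlonglongrightarrow> 0"
  proof (rule Lim_null_comparison)
    have "norm (drift_integral picard_limit t \<omega> - drift_integral (picard_iterate n) t \<omega>)
        \<le> (?C * (1/2)^n) / 2 * exp (4 * D * t)" for n
      using D_pos T_pos close t \<omega>
      by (intro drift_integral_contraction admissible_picard_limit admissible_picard_iterate AE_I2) auto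
    then show "\<forall>\<^sub>F n in sequentially. norm (drift_integral picard_limit t \<omega> - drift_integral (picard_iterate n) t \<omega>)
        \<le> (?C * (1/2)^n) / 2 * exp (4 * D * t)"
      by simp
    have "(\<lambda>n. (?C * (1/2::real)^n) / 2 * exp (4 * D * t)) \<longlonglongrightarrow> (?C * 0) / 2 * exp (4 * D * t)"
      by (intro tendsto_intros LIMSEQ_power_zero) simp_all
    then show "(\<lambda>n. (?C * (1/2::real)^n) / 2 * exp (4 * D * t)) \<longlonglongrightarrow> 0"
      by simp
  qed
  then have "(\<lambda>n. drift_integral picard_limit t \<omega> - (drift_integral picard_limit t \<omega> - drift_integral (picard_iterate n) t \<omega>))
      \<longlonglongrightarrow> drift_integral picard_limit t \<omega> - 0"
    by (intro tendsto_diff tendsto_const)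
  then show ?thesis by simp
qed

lemma picard_limit_fixed_point:
  assumes \<omega>: "\<omega> \<in> space M" and t: "t \<in> {0..T}"
  shows "picard_limit t \<omega> = picard picard_limit t \<omega>"
proof (rule LIMSEQ_unique)
  show "(\<lambda>n. picard_iterate (Suc n) t \<omega>) \<longlonglongrightarrow> picard_limit t \<omega>"
    using picard_limit_LIMSEQ(1)[OF \<omega> t] by (rule LIMSEQ_Suc)
  show "(\<lambda>n. picard_iterate (Suc n) t \<omega>) \<longlonglongrightarrow> picard picard_limit t \<omega>"
    unfolding picard_iterate_Suc picard_def
    by (intro tendsto_add tendsto_const drift_integral_picard_iterate_LIMSEQ[OF \<omega> t])
qed

lemma mv_solution_iff_fixed_point:
  "mv_solution M F T W X0 L Y \<longleftrightarrow> admissible Y \<and> (AE \<omega> in M. \<forall>t\<in>{0..T}. Y t \<omega> = picard Y t \<omega>)"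
  by (simp add: mv_solution_def admissible_def picard_def drift_integral_def)

lemma fixed_points_close:
  assumes Z: "admissible Z" and Z': "admissible Z'"
    and fixed: "AE \<omega> in M. \<forall>t\<in>{0..T}. Z t \<omega> = picard Z t \<omega>"
    and fixed': "AE \<omega> in M. \<forall>t\<in>{0..T}. Z' t \<omega> = picard Z' t \<omega>"
  shows "AE \<omega> in M. \<forall>t\<in>{0..T}. norm (Z t \<omega> - Z' t \<omega>) \<le> (2 * D * T) / 2^n * exp (4 * D * t)"
proof -
  have diff: "AE \<omega> in M. \<omega> \<in> space M \<and>
      (\<forall>t\<in>{0..T}. Z t \<omega> - Z' t \<omega> = drift_integral Z t \<omega> - drift_integral Z' t \<omega>)"
    using fixed fixed' AE_space by eventually_elim (simp add: picard_def)
  show ?thesis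
  proof (induction n)
    case 0
    show ?case using diff
    proof (elim eventually_mono, safe)
      fix \<omega> t assume \<omega>: "\<omega> \<in> space M" and t: "t \<in> {0..T}"
        and "\<forall>t\<in>{0..T}. Z t \<omega> - Z' t \<omega> = drift_integral Z t \<omega> - drift_integral Z' t \<omega>"
      then have "norm (Z t \<omega> - Z' t \<omega>) \<le> norm (drift_integral Z t \<omega>) + norm (drift_integral Z' t \<omega>)"
        by (simp add: norm_triangle_ineq4)
      also have "\<dots> \<le> D * t + D * t"
        unfolding drift_integral_def
        by (intro add_mono mv_drift_path_integrable(2)[OF Z t \<omega>] mv_drift_path_integrable(2)[OF Z' t \<omega>])
      also have "\<dots> \<le> 2 * D * T * exp (4 * D * t)"
        using t D_pos T_pos by (intro order_trans[OF _ le_mult_exp]) auto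
      finally show "norm (Z t \<omega> - Z' t \<omega>) \<le> (2 * D * T) / 2^0 * exp (4 * D * t)" by simp
    qed
  next
    case (Suc n)
    have close: "AE \<omega>' in M. norm (Z s \<omega>' - Z' s \<omega>') \<le> (2 * D * T) / 2^n * exp (4 * D * s)"
      if "s \<in> {0..T}" for s
      using Suc.IH by (rule eventually_mono) (use that in blast)
    show ?case using Suc.IH diff
    proof (eventually_elim, safe)
      fix \<omega> t assume \<omega>: "\<omega> \<in> space M" and t: "t \<in> {0..T}"
        and IH: "\<forall>t\<in>{0..T}. norm (Z t \<omega> - Z' t \<omega>) \<le> (2 * D * T) / 2^n * exp (4 * D * t)"
        and "\<forall>t\<in>{0..T}. Z t \<omega> - Z' t \<omega> = drift_integral Z t \<omega> - drift_integral Z' t \<omega>"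
      then have "norm (Z t \<omega> - Z' t \<omega>) = norm (drift_integral Z t \<omega> - drift_integral Z' t \<omega>)"
        by simp
      also have "\<dots> \<le> (2 * D * T) / 2^n / 2 * exp (4 * D * t)"
        using D_pos T_pos t \<omega> IH close
        by (intro drift_integral_contraction[OF Z Z']) auto
      finally show "norm (Z t \<omega> - Z' t \<omega>) \<le> (2 * D * T) / 2^(Suc n) * exp (4 * D * t)" by simp
    qed
  qed
qed

lemma fixed_points_unique:
  assumes "admissible Z" and "admissible Z'"
    and "AE \<omega> in M. \<forall>t\<in>{0..T}. Z t \<omega> = picard Z t \<omega>"
    and "AE \<omega> in M. \<forall>t\<in>{0..T}. Z' t \<omega> = picard Z' t \<omega>"
  shows "AE \<omega> in M. \<forall>t\<in>{0..T}. Z t \<omega> = Z' t \<omega>"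
proof -
  have "AE \<omega> in M. \<forall>n. \<forall>t\<in>{0..T}. norm (Z t \<omega> - Z' t \<omega>) \<le> (2 * D * T * exp (4 * D * t)) * (1/2)^n"
    using fixed_points_close[OF assms] by (simp add: AE_all_countable field_simps)
  then show ?thesis
  proof (rule eventually_mono, intro ballI)
    fix \<omega> t
    assume close: "\<forall>n. \<forall>t\<in>{0..T}. norm (Z t \<omega> - Z' t \<omega>) \<le> (2 * D * T * exp (4 * D * t)) * (1/2)^n"
      and t: "t \<in> {0..T}"
    have "(\<lambda>n. (2 * D * T * exp (4 * D * t)) * (1/2::real)^n) \<longlonglongrightarrow> (2 * D * T * exp (4 * D * t)) * 0"
      by (intro tendsto_mult tendsto_const LIMSEQ_power_zero) simp
    then have "norm (Z t \<omega> - Z' t \<omega>) \<le> (2 * D * T * exp (4 * D * t)) * 0"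
      using close t by (intro LIMSEQ_le_const) auto
    then show "Z t \<omega> = Z' t \<omega>" by simp
  qed
qed

end

theorem theorem6p1:
  fixes T D :: real
    and L :: "real \<Rightarrow> real ^ 'd \<Rightarrow> real ^ 'd"
    and h1 h2 :: "real \<Rightarrow> real"
    and M :: "'a measure" and F :: "real \<Rightarrow> 'a measure"
    and W :: "real \<Rightarrow> 'a \<Rightarrow> real ^ 'd" and X0 :: "'a \<Rightarrow> real ^ 'd"
    and q0 :: "(real ^ 'd) measure"
  assumes "T > 0"
    and "(\<lambda>(t, x). L t x) \<in> borel_measurable (restrict_space borel ({0..T} \<times> UNIV))"
    and "\<And>t x. t \<in> {0<..<T} \<Longrightarrow> norm (L t x) \<le> h1 t"
    and "\<And>t x y. t \<in> {0<..<T} \<Longrightarrow> norm (L t x - L t y) \<le> h2 t * norm (x - y)"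
    and "\<And>t. t \<in> {0<..<T} \<Longrightarrow> h1 t \<ge> 0"
    and "\<And>t. t \<in> {0<..<T} \<Longrightarrow> h2 t \<ge> 0"
    and "D > 0"
    and "\<And>t. t \<le> T \<Longrightarrow> (\<integral>\<^sup>+ s\<in>{0<..<t}. ennreal (h1 s) \<partial>lborel) \<le> ennreal D"
    and "\<And>t. t \<le> T \<Longrightarrow> (\<integral>\<^sup>+ s\<in>{0<..<t}. ennreal (h2 s) \<partial>lborel) \<le> ennreal D"
    and "filtered_space M F"
    and "brownian_motion M F T W"
    and "X0 \<in> borel_measurable (F 0)"
    and "distr M borel X0 = q0"
  shows "\<exists>X. mv_solution M F T W X0 L X \<and>
           (\<forall>Y. mv_solution M F T W X0 L Y \<longrightarrow> (AE \<omega> in M. \<forall>t\<in>{0..T}. X t \<omega> = Y t \<omega>))"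
proof -
  interpret mckean_vlasov T D L h1 h2 M F W X0
    using assms(1-4,6-12) by unfold_locales
  have fixed: "AE \<omega> in M. \<forall>t\<in>{0..T}. picard_limit t \<omega> = picard picard_limit t \<omega>"
    by (intro AE_I2 ballI picard_limit_fixed_point)
  then have "mv_solution M F T W X0 L picard_limit"
    using admissible_picard_limit by (simp only: mv_solution_iff_fixed_point)
  moreover have "AE \<omega> in M. \<forall>t\<in>{0..T}. picard_limit t \<omega> = Y t \<omega>" if "mv_solution M F T W X0 L Y" for Y
    using that by (intro fixed_points_unique[OF admissible_picard_limit _ fixed]) (simp_all add: mv_solution_iff_fixed_point)
  ultimately show ?thesis by blast
qed

end
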